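(* Let $T>0$, $r\ge0$, $\rho\in[-1,1]$, $\alpha\ge0$, let $\mu(S,t),\sigma(S,t)\ge0$ be functions on $(0,\infty)\times[0,T]$ and $a(H,t),b(H,t)$ functions on $(0,\infty)\times[0,T]$ with $b$ nonvanishing, and set $\tilde\mu(S,H,t)=\mu(S,t)-(a(H,t)-r)\rho\sigma(S,t)/b(H,t)$. Define, for $S,H>0$, $t\in[0,T]$, $v,p,z\in\mathbb R$, $$h(S,H,t,v,p,z)=\big(\tilde\mu(S,H,t)+\alpha\sqrt{1-\rho^2}\,\sigma(S,t)\,\mathrm{sgn}(p)\big)Sp+rHz-rv.$$ Assume there are constants $C_1,C_2>0$ with $|\sigma(S_1,t)-\sigma(S_2,t)|\le C_1|\ln S_1-\ln S_2|$ and $\sigma(S,t)\le C_2\sqrt{S(1+\ln S)}$ for all $S,S_1,S_2>0$, $t\in[0,T]$. Assume further that there are constants $K,C_5>0$ with $|\tilde\mu(S,H,t)|\le K(1+|\ln S|+|\ln H|)$ and $|\tilde\mu(S_1,H_1,t)-\tilde\mu(S_2,H_2,t)|\le C_5|\ln S_1-\ln S_2|$ for all $S,H,S_i,H_i>0$, $t\in[0,T]$. Then: (iii) there exist functions $d_1,d_2$ with $0\le d_1(S,H,t)\le K'S(1+|\ln S|+|\ln H|)$ and $0\le d_2(S,H,t)\le K'H(1+|\ln S|+|\ln H|)$ for some constant $K'$, such that $|h(S,H,t,v,p,z)-h(S,H,t,v,q,w)|\le d_1(S,H,t)|p-q|+d_2(S,H,t)|z-w|$ for all $S,H>0$, $t\in[0,T]$,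 $v,p,q,z,w\in\mathbb R$; and (iv) there exists $m_1>0$ such that $$\Big|h\Big(S_1,H_1,t,v,\frac{p}{S_1},\frac{q}{H_1}\Big)-h\Big(S_2,H_2,t,v,\frac{p}{S_2},\frac{q}{H_2}\Big)\Big|\le m_1\big(1+\sqrt{p^2+q^2}\big)\Big[\Big|\ln\frac{S_1}{S_2}\Big|+\Big|\ln\frac{H_1}{H_2}\Big|\Big]$$ for all $S_1,H_1,S_2,H_2>0$, $t\in[0,T]$, $v,p,q\in\mathbb R$.
   Context: $h$ is the first-order part of the writer's pricing PDE for an option on a non-traded asset $S$ hedged with a correlated traded asset $H$; properties (iii) and (iv) are the hypotheses on the nonlinearity needed for a comparison principle for the operator $v_t+\frac12\sigma^2S^2v_{SS}+\rho\sigma bSHv_{SH}+\frac12b^2H^2v_{HH}+h(S,H,t,v,v_S,v_H)$. Here $\mathrm{sgn}$ denotes the sign function. *)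

theory Defs
  imports "HOL-Analysis.Analysis"
begin

definition mu_tilde ::
  "(real \<Rightarrow> real \<Rightarrow> real) \<Rightarrow> (real \<Rightarrow> real \<Rightarrow> real) \<Rightarrow>
   (real \<Rightarrow> real \<Rightarrow> real) \<Rightarrow> (real \<Rightarrow> real \<Rightarrow> real) \<Rightarrow> real \<Rightarrow> real \<Rightarrow>
   real \<Rightarrow> real \<Rightarrow> real \<Rightarrow> real" where
  "mu_tilde \<mu> \<sigma> a b r \<rho> S H t = \<mu> S t - (a H t - r) * \<rho> * \<sigma> S t / b H t"

definition hfun ::
  "(real \<Rightarrow> real \<Rightarrow> real) \<Rightarrow> (real \<Rightarrow> real \<Rightarrow> real) \<Rightarrow>
   (real \<Rightarrow> real \<Rightarrow> real) \<Rightarrow> (real \<Rightarrow> real \<Rightarrow> real) \<Rightarrow> real \<Rightarrow> real \<Rightarrow> real \<Rightarrow>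
   real \<Rightarrow> real \<Rightarrow> real \<Rightarrow> real \<Rightarrow> real \<Rightarrow> real \<Rightarrow> real" where
  "hfun \<mu> \<sigma> a b r \<rho> \<alpha> S H t v p z =
     (mu_tilde \<mu> \<sigma> a b r \<rho> S H t + \<alpha> * sqrt (1 - \<rho>\<^sup>2) * \<sigma> S t * sgn p) * S * p
     + r * H * z - r * v"

end

theory Submission
  imports Defs
begin

(* With c = \<alpha> sqrt(1 - \<rho>^2), which lies in [0, \<alpha>], the only nonlinear term of h is
   c \<sigma> S sgn(p) p = c \<sigma> S |p|, which is 1-Lipschitz in p. Hence (iii) holds with
   d1 = (|\<mu>~| + c \<sigma>) S and d2 = r H, and the log-growth of \<mu>~ and \<sigma> bounds d1. In the
   variables p/S and q/H the factors S and H cancel, h becomes \<mu>~ p + c \<sigma> |p| + r q - r v, and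
   (iv) follows from the log-Lipschitz continuity of \<mu>~ and \<sigma> in S. *)

lemma sgn_mult_self_real: "sgn p * p = \<bar>p :: real\<bar>"
  by (simp add: abs_sgn mult.commute)

lemma sqrt_one_minus_square_bounds:
  fixes \<rho> :: real
  assumes "\<bar>\<rho>\<bar> \<le> 1"
  shows "0 \<le> sqrt (1 - \<rho>\<^sup>2)" and "sqrt (1 - \<rho>\<^sup>2) \<le> 1"
  using assms abs_square_le_1[of \<rho>] by auto

lemma abs_le_one_plus_sqrt_sum_squares: "\<bar>p\<bar> \<le> 1 + sqrt (p\<^sup>2 + q\<^sup>2 :: real)"
proof -
  have "\<bar>p\<bar> \<le> sqrt (p\<^sup>2 + q\<^sup>2)"
    by (metis real_sqrt_abs real_sqrt_le_mono le_add_same_cancel1 zero_le_power2)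
  then show ?thesis by linarith
qed

lemma hfun_diff_eq:
  "hfun \<mu> \<sigma> a b r \<rho> \<alpha> S H t v p z - hfun \<mu> \<sigma> a b r \<rho> \<alpha> S H t v q w
   = mu_tilde \<mu> \<sigma> a b r \<rho> S H t * S * (p - q)
     + \<alpha> * sqrt (1 - \<rho>\<^sup>2) * \<sigma> S t * S * (\<bar>p\<bar> - \<bar>q\<bar>) + r * H * (z - w)"
  unfolding hfun_def sgn_mult_self_real[symmetric] by (simp add: algebra_simps)

lemma abs_hfun_diff_le:
  assumes S: "S > 0" and H: "H > 0" and r: "r \<ge> 0" and alpha: "\<alpha> \<ge> 0" and rho: "\<bar>\<rho>\<bar> \<le> 1"
    and sigma: "\<sigma> S t \<ge> 0"
  shows "\<bar>hfun \<mu> \<sigma> a b r \<rho> \<alpha> S H t v p z - hfun \<mu> \<sigma> a b r \<rho> \<alpha> S H t v q w\<bar>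
    \<le> (\<bar>mu_tilde \<mu> \<sigma> a b r \<rho> S H t\<bar> + \<alpha> * sqrt (1 - \<rho>\<^sup>2) * \<sigma> S t) * S * \<bar>p - q\<bar>
       + r * H * \<bar>z - w\<bar>"
proof -
  let ?M = "mu_tilde \<mu> \<sigma> a b r \<rho> S H t" and ?c = "\<alpha> * sqrt (1 - \<rho>\<^sup>2)"
  have coeff_nonneg: "?c * \<sigma> S t * S \<ge> 0"
    using sqrt_one_minus_square_bounds[OF rho] alpha sigma S by simp
  have "\<bar>hfun \<mu> \<sigma> a b r \<rho> \<alpha> S H t v p z - hfun \<mu> \<sigma> a b r \<rho> \<alpha> S H t v q w\<bar>
      \<le> \<bar>?M * S * (p - q)\<bar> + \<bar>?c * \<sigma> S t * S * (\<bar>p\<bar> - \<bar>q\<bar>)\<bar> + \<bar>r * H * (z - w)\<bar>"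
    unfolding hfun_diff_eq
    by (rule order_trans[OF abs_triangle_ineq add_right_mono[OF abs_triangle_ineq]])
  also have "\<dots> = \<bar>?M\<bar> * S * \<bar>p - q\<bar> + ?c * \<sigma> S t * S * \<bar>\<bar>p\<bar> - \<bar>q\<bar>\<bar> + r * H * \<bar>z - w\<bar>"
    using S H r alpha sigma sqrt_one_minus_square_bounds[OF rho] by (simp add: abs_mult)
  also have "\<dots> \<le> \<bar>?M\<bar> * S * \<bar>p - q\<bar> + ?c * \<sigma> S t * S * \<bar>p - q\<bar> + r * H * \<bar>z - w\<bar>"
    using mult_left_mono[OF abs_triangle_ineq3[of p q] coeff_nonneg] by linarith
  finally show ?thesis
    by (simp add: algebra_simps)
qed

lemma hfun_log_gradient_eq:
  assumes "S > 0" and "H > 0"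
  shows "hfun \<mu> \<sigma> a b r \<rho> \<alpha> S H t v (p / S) (q / H)
    = mu_tilde \<mu> \<sigma> a b r \<rho> S H t * p + \<alpha> * sqrt (1 - \<rho>\<^sup>2) * \<sigma> S t * \<bar>p\<bar> + r * q - r * v"
proof -
  have "sgn (p / S) * (S * (p / S)) = \<bar>p\<bar>"
    using assms by (simp add: sgn_mult_self_real)
  moreover have "S * (p / S) = p" "H * (q / H) = q"
    using assms by simp_all
  ultimately show ?thesis
    unfolding hfun_def
    by (simp add: distrib_right mult.assoc mult.left_commute[of _ S] del: times_divide_eq_right)
qed

lemma abs_hfun_log_gradient_diff_le:
  assumes S1: "S1 > 0" and H1: "H1 > 0" and S2: "S2 > 0" and H2: "H2 > 0"
    and alpha: "\<alpha> \<ge> 0" and rho: "\<bar>\<rho>\<bar> \<le> 1"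
    and mut_lip: "\<bar>mu_tilde \<mu> \<sigma> a b r \<rho> S1 H1 t - mu_tilde \<mu> \<sigma> a b r \<rho> S2 H2 t\<bar> \<le> C5 * D"
    and sigma_lip: "\<bar>\<sigma> S1 t - \<sigma> S2 t\<bar> \<le> C1 * D"
  shows "\<bar>hfun \<mu> \<sigma> a b r \<rho> \<alpha> S1 H1 t v (p / S1) (q / H1)
           - hfun \<mu> \<sigma> a b r \<rho> \<alpha> S2 H2 t v (p / S2) (q / H2)\<bar>
         \<le> (C5 + \<alpha> * C1) * D * \<bar>p\<bar>"
proof -
  let ?M = "mu_tilde \<mu> \<sigma> a b r \<rho>" and ?c = "\<alpha> * sqrt (1 - \<rho>\<^sup>2)"
  have c: "0 \<le> ?c" "?c \<le> \<alpha>"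
    using sqrt_one_minus_square_bounds[OF rho] alpha by (auto intro: mult_left_le)
  have "\<bar>hfun \<mu> \<sigma> a b r \<rho> \<alpha> S1 H1 t v (p / S1) (q / H1)
           - hfun \<mu> \<sigma> a b r \<rho> \<alpha> S2 H2 t v (p / S2) (q / H2)\<bar>
      = \<bar>(?M S1 H1 t - ?M S2 H2 t) * p + ?c * (\<sigma> S1 t - \<sigma> S2 t) * \<bar>p\<bar>\<bar>"
    using S1 H1 S2 H2 by (simp add: hfun_log_gradient_eq algebra_simps)
  also have "\<dots> \<le> \<bar>?M S1 H1 t - ?M S2 H2 t\<bar> * \<bar>p\<bar> + ?c * \<bar>\<sigma> S1 t - \<sigma> S2 t\<bar> * \<bar>p\<bar>"
    by (rule order_trans[OF abs_triangle_ineq])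
      (use alpha sqrt_one_minus_square_bounds[OF rho] in \<open>simp add: abs_mult\<close>)
  also have "\<dots> \<le> C5 * D * \<bar>p\<bar> + \<alpha> * (C1 * D) * \<bar>p\<bar>"
    using mult_right_mono[OF mut_lip abs_ge_zero[of p]]
      mult_right_mono[OF mult_mono[OF c(2) sigma_lip alpha abs_ge_zero] abs_ge_zero[of p]]
    by linarith
  finally show ?thesis
    by (simp add: algebra_simps)
qed

lemma hfun_gradient_lipschitz:
  fixes \<mu> \<sigma> a b :: "real \<Rightarrow> real \<Rightarrow> real" and T r \<rho> \<alpha> C K :: real
  assumes r: "r \<ge> 0" and rho: "\<bar>\<rho>\<bar> \<le> 1" and alpha: "\<alpha> \<ge> 0" and C: "C \<ge> 0" and K: "K \<ge> 0"
    and sigma_nonneg: "\<And>S t. S > 0 \<Longrightarrow> t \<in> {0..T} \<Longrightarrow> \<sigma> S t \<ge> 0"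
    and sigma_growth: "\<And>S t. S > 0 \<Longrightarrow> t \<in> {0..T} \<Longrightarrow> \<sigma> S t \<le> C * (1 + \<bar>ln S\<bar>)"
    and mut_growth: "\<And>S H t. S > 0 \<Longrightarrow> H > 0 \<Longrightarrow> t \<in> {0..T} \<Longrightarrow>
          \<bar>mu_tilde \<mu> \<sigma> a b r \<rho> S H t\<bar> \<le> K * (1 + \<bar>ln S\<bar> + \<bar>ln H\<bar>)"
  shows "\<exists>(d1 :: real \<Rightarrow> real \<Rightarrow> real \<Rightarrow> real) (d2 :: real \<Rightarrow> real \<Rightarrow> real \<Rightarrow> real) (K' :: real).
            (\<forall>S H t. S > 0 \<longrightarrow> H > 0 \<longrightarrow> t \<in> {0..T} \<longrightarrow>
               0 \<le> d1 S H t \<and> d1 S H t \<le> K' * S * (1 + \<bar>ln S\<bar> + \<bar>ln H\<bar>) \<and>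
               0 \<le> d2 S H t \<and> d2 S H t \<le> K' * H * (1 + \<bar>ln S\<bar> + \<bar>ln H\<bar>)) \<and>
            (\<forall>S H t v p q z w. S > 0 \<longrightarrow> H > 0 \<longrightarrow> t \<in> {0..T} \<longrightarrow>
               \<bar>hfun \<mu> \<sigma> a b r \<rho> \<alpha> S H t v p z - hfun \<mu> \<sigma> a b r \<rho> \<alpha> S H t v q w\<bar>
                 \<le> d1 S H t * \<bar>p - q\<bar> + d2 S H t * \<bar>z - w\<bar>)"
proof (intro exI conjI allI impI)
  let ?c = "\<alpha> * sqrt (1 - \<rho>\<^sup>2)"
  define d1 where "d1 S H t = (\<bar>mu_tilde \<mu> \<sigma> a b r \<rho> S H t\<bar> + ?c * \<sigma> S t) * S" for S H t
  define d2 where "d2 (S :: real) H (t :: real) = r * H" for S H t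
  have c: "0 \<le> ?c" "?c \<le> \<alpha>"
    using sqrt_one_minus_square_bounds[OF rho] alpha by (auto intro: mult_left_le)
  fix S H t :: real
  assume S: "S > 0" and H: "H > 0" and t: "t \<in> {0..T}"
  let ?L = "1 + \<bar>ln S\<bar> + \<bar>ln H\<bar>"
  have sigma: "0 \<le> \<sigma> S t" "\<sigma> S t \<le> C * ?L"
    using sigma_nonneg[OF S t] sigma_growth[OF S t] C
    by (auto intro: order_trans[OF _ mult_left_mono[of "1 + \<bar>ln S\<bar>" ?L]])
  have "?c * \<sigma> S t \<le> \<alpha> * C * ?L"
    using mult_mono[OF c(2) sigma(2) alpha sigma(1)] by (simp add: mult.assoc)
  moreover have "0 \<le> r * ?L"
    using r by simp
  ultimately have "\<bar>mu_tilde \<mu> \<sigma> a b r \<rho> S H t\<bar> + ?c * \<sigma> S t \<le> K * ?L + \<alpha> * C * ?L + r * ?L"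
    using mut_growth[OF S H t] by linarith
  then have "\<bar>mu_tilde \<mu> \<sigma> a b r \<rho> S H t\<bar> + ?c * \<sigma> S t \<le> (K + \<alpha> * C + r) * ?L"
    by (simp only: distrib_right)
  then show "d1 S H t \<le> (K + \<alpha> * C + r) * S * ?L"
    unfolding d1_def using S by (simp add: mult_right_mono mult_ac)
  have "r \<le> (K + \<alpha> * C + r) * ?L"
    using K alpha C r by (simp add: algebra_simps add_increasing)
  then show "d2 S H t \<le> (K + \<alpha> * C + r) * H * ?L"
    unfolding d2_def using H by (simp add: mult_right_mono mult_ac)
  show "0 \<le> d1 S H t" "0 \<le> d2 S H t"
    unfolding d1_def d2_def using S H r c sigma by simp_all
  fix v p q z w :: real
  show "\<bar>hfun \<mu> \<sigma> a b r \<rho> \<alpha> S H t v p z - hfun \<mu> \<sigma> a b r \<rho> \<alpha> S H t v q w\<bar>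
      \<le> d1 S H t * \<bar>p - q\<bar> + d2 S H t * \<bar>z - w\<bar>"
    unfolding d1_def d2_def using abs_hfun_diff_le[of S H r \<alpha> \<rho> \<sigma> t] S H r alpha rho sigma(1) by simp
qed

lemma hfun_log_gradient_lipschitz:
  fixes \<mu> \<sigma> a b :: "real \<Rightarrow> real \<Rightarrow> real" and T r \<rho> \<alpha> C1 C5 :: real
  assumes rho: "\<bar>\<rho>\<bar> \<le> 1" and alpha: "\<alpha> \<ge> 0" and C1: "C1 \<ge> 0" and C5: "C5 > 0"
    and sigma_lip: "\<And>S1 S2 t. S1 > 0 \<Longrightarrow> S2 > 0 \<Longrightarrow> t \<in> {0..T} \<Longrightarrow>
          \<bar>\<sigma> S1 t - \<sigma> S2 t\<bar> \<le> C1 * \<bar>ln S1 - ln S2\<bar>"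
    and mut_lip: "\<And>S1 H1 S2 H2 t. S1 > 0 \<Longrightarrow> H1 > 0 \<Longrightarrow> S2 > 0 \<Longrightarrow> H2 > 0 \<Longrightarrow> t \<in> {0..T} \<Longrightarrow>
          \<bar>mu_tilde \<mu> \<sigma> a b r \<rho> S1 H1 t - mu_tilde \<mu> \<sigma> a b r \<rho> S2 H2 t\<bar>
            \<le> C5 * \<bar>ln S1 - ln S2\<bar>"
  shows "\<exists>m1 > 0. \<forall>S1 H1 S2 H2 t v p q. S1 > 0 \<longrightarrow> H1 > 0 \<longrightarrow> S2 > 0 \<longrightarrow> H2 > 0 \<longrightarrow> t \<in> {0..T} \<longrightarrow>
               \<bar>hfun \<mu> \<sigma> a b r \<rho> \<alpha> S1 H1 t v (p / S1) (q / H1)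
                 - hfun \<mu> \<sigma> a b r \<rho> \<alpha> S2 H2 t v (p / S2) (q / H2)\<bar>
               \<le> m1 * (1 + sqrt (p\<^sup>2 + q\<^sup>2)) * (\<bar>ln (S1 / S2)\<bar> + \<bar>ln (H1 / H2)\<bar>)"
proof (intro exI[of _ "C5 + \<alpha> * C1"] conjI allI impI)
  show "0 < C5 + \<alpha> * C1"
    using C5 C1 alpha by (simp add: add_pos_nonneg)
  fix S1 H1 S2 H2 t v p q :: real
  assume S1: "S1 > 0" and H1: "H1 > 0" and S2: "S2 > 0" and H2: "H2 > 0" and t: "t \<in> {0..T}"
  let ?m1 = "C5 + \<alpha> * C1" and ?D = "\<bar>ln S1 - ln S2\<bar>"
  have "?D \<le> \<bar>ln (S1 / S2)\<bar> + \<bar>ln (H1 / H2)\<bar>"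
    using S1 S2 by (simp add: ln_divide_pos)
  then have "\<bar>p\<bar> * ?D \<le> (1 + sqrt (p\<^sup>2 + q\<^sup>2)) * (\<bar>ln (S1 / S2)\<bar> + \<bar>ln (H1 / H2)\<bar>)"
    using abs_le_one_plus_sqrt_sum_squares[of p q] by (intro mult_mono) auto
  moreover have "0 \<le> ?m1"
    using C5 C1 alpha by simp
  ultimately have "?m1 * (\<bar>p\<bar> * ?D)
      \<le> ?m1 * ((1 + sqrt (p\<^sup>2 + q\<^sup>2)) * (\<bar>ln (S1 / S2)\<bar> + \<bar>ln (H1 / H2)\<bar>))"
    by (rule mult_left_mono)
  then have "?m1 * ?D * \<bar>p\<bar> \<le> ?m1 * (1 + sqrt (p\<^sup>2 + q\<^sup>2)) * (\<bar>ln (S1 / S2)\<bar> + \<bar>ln (H1 / H2)\<bar>)"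
    by (simp only: ac_simps)
  with abs_hfun_log_gradient_diff_le[OF S1 H1 S2 H2 alpha rho mut_lip[OF S1 H1 S2 H2 t] sigma_lip[OF S1 S2 t]]
  show "\<bar>hfun \<mu> \<sigma> a b r \<rho> \<alpha> S1 H1 t v (p / S1) (q / H1)
      - hfun \<mu> \<sigma> a b r \<rho> \<alpha> S2 H2 t v (p / S2) (q / H2)\<bar>
    \<le> ?m1 * (1 + sqrt (p\<^sup>2 + q\<^sup>2)) * (\<bar>ln (S1 / S2)\<bar> + \<bar>ln (H1 / H2)\<bar>)"
    by (rule order_trans)
qed

theorem lemmaA2:
  fixes \<mu> \<sigma> a b :: "real \<Rightarrow> real \<Rightarrow> real"
    and T r \<rho> \<alpha> C1 C2 K C5 :: real
  assumes T: "T > 0" and r: "r \<ge> 0" and rho: "-1 \<le> \<rho>" "\<rho> \<le> 1" and alpha: "\<alpha> \<ge> 0"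
    and mu_nonneg: "\<And>S t. S > 0 \<Longrightarrow> t \<in> {0..T} \<Longrightarrow> \<mu> S t \<ge> 0"
    and sigma_nonneg: "\<And>S t. S > 0 \<Longrightarrow> t \<in> {0..T} \<Longrightarrow> \<sigma> S t \<ge> 0"
    and b_nz: "\<And>H t. H > 0 \<Longrightarrow> t \<in> {0..T} \<Longrightarrow> b H t \<noteq> 0"
    and C1: "C1 > 0" and C2: "C2 > 0"
    and sigma_lip: "\<And>S1 S2 t. S1 > 0 \<Longrightarrow> S2 > 0 \<Longrightarrow> t \<in> {0..T} \<Longrightarrow>
          \<bar>\<sigma> S1 t - \<sigma> S2 t\<bar> \<le> C1 * \<bar>ln S1 - ln S2\<bar>"
    and sigma_growth: "\<And>S t. S > 0 \<Longrightarrow> 1 + ln S \<ge> 0 \<Longrightarrow> t \<in> {0..T} \<Longrightarrow>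
          \<sigma> S t \<le> C2 * sqrt (S * (1 + ln S))"
    and K: "K > 0" and C5: "C5 > 0"
    and mut_growth: "\<And>S H t. S > 0 \<Longrightarrow> H > 0 \<Longrightarrow> t \<in> {0..T} \<Longrightarrow>
          \<bar>mu_tilde \<mu> \<sigma> a b r \<rho> S H t\<bar> \<le> K * (1 + \<bar>ln S\<bar> + \<bar>ln H\<bar>)"
    and mut_lip: "\<And>S1 H1 S2 H2 t. S1 > 0 \<Longrightarrow> H1 > 0 \<Longrightarrow> S2 > 0 \<Longrightarrow> H2 > 0 \<Longrightarrow> t \<in> {0..T} \<Longrightarrow>
          \<bar>mu_tilde \<mu> \<sigma> a b r \<rho> S1 H1 t - mu_tilde \<mu> \<sigma> a b r \<rho> S2 H2 t\<bar>
            \<le> C5 * \<bar>ln S1 - ln S2\<bar>"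
  shows "(\<exists>(d1 :: real \<Rightarrow> real \<Rightarrow> real \<Rightarrow> real) (d2 :: real \<Rightarrow> real \<Rightarrow> real \<Rightarrow> real) (K' :: real).
            (\<forall>S H t. S > 0 \<longrightarrow> H > 0 \<longrightarrow> t \<in> {0..T} \<longrightarrow>
               0 \<le> d1 S H t \<and> d1 S H t \<le> K' * S * (1 + \<bar>ln S\<bar> + \<bar>ln H\<bar>) \<and>
               0 \<le> d2 S H t \<and> d2 S H t \<le> K' * H * (1 + \<bar>ln S\<bar> + \<bar>ln H\<bar>)) \<and>
            (\<forall>S H t v p q z w. S > 0 \<longrightarrow> H > 0 \<longrightarrow> t \<in> {0..T} \<longrightarrow>
               \<bar>hfun \<mu> \<sigma> a b r \<rho> \<alpha> S H t v p z - hfun \<mu> \<sigma> a b r \<rho> \<alpha> S H t v q w\<bar>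
                 \<le> d1 S H t * \<bar>p - q\<bar> + d2 S H t * \<bar>z - w\<bar>))
       \<and> (\<exists>m1 > 0. \<forall>S1 H1 S2 H2 t v p q. S1 > 0 \<longrightarrow> H1 > 0 \<longrightarrow> S2 > 0 \<longrightarrow> H2 > 0 \<longrightarrow> t \<in> {0..T} \<longrightarrow>
               \<bar>hfun \<mu> \<sigma> a b r \<rho> \<alpha> S1 H1 t v (p / S1) (q / H1)
                 - hfun \<mu> \<sigma> a b r \<rho> \<alpha> S2 H2 t v (p / S2) (q / H2)\<bar>
               \<le> m1 * (1 + sqrt (p\<^sup>2 + q\<^sup>2)) * (\<bar>ln (S1 / S2)\<bar> + \<bar>ln (H1 / H2)\<bar>))"
proof -
  have rho': "\<bar>\<rho>\<bar> \<le> 1"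
    using rho by simp
  \<comment> \<open>The square-root growth bound on \<sigma> is only needed at S = 1.\<close>
  have sigma_log_growth: "\<sigma> S t \<le> (C1 + C2) * (1 + \<bar>ln S\<bar>)" if S: "S > 0" and t: "t \<in> {0..T}" for S t
  proof -
    have "\<sigma> 1 t \<le> C2"
      using sigma_growth[of 1 t] t by simp
    moreover have "\<sigma> S t - \<sigma> 1 t \<le> C1 * \<bar>ln S\<bar>"
      using sigma_lip[OF S _ t, of 1] by simp
    moreover have "0 \<le> C2 * \<bar>ln S\<bar>"
      using C2 by simp
    ultimately show ?thesis
      using C1 by (simp add: algebra_simps)
  qed
  have "C1 + C2 \<ge> 0"
    using C1 C2 by simp
  from hfun_gradient_lipschitz[OF r rho' alpha this less_imp_le[OF K] sigma_nonneg sigma_log_growth mut_growth]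
    hfun_log_gradient_lipschitz[OF rho' alpha less_imp_le[OF C1] C5 sigma_lip mut_lip]
  show ?thesis
    by (intro conjI)
qed

end
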